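(* Let $t>0$ and $\lambda = \frac{1}{1-e^{-2t}}$ (so that $\lambda(1-e^{-2t}) = 1$). Then for every $M>0$ there exists a bounded, measurable, $-\lambda$-log-concave function $f:\mathbb{R}\to(0,\infty)$ with $\int f\,d\gamma = 1$ such that $f_t$ is not $-M$-log-concave; in fact one can take $f$ so that $f_t$ is $C^2$ and $(\log f_t)''(0) \ge M$.
   Context: $\gamma$ is the standard Gaussian measure on $\mathbb{R}$. For $t \ge 0$ and $f \in L^1(\gamma)$, the Ornstein–Uhlenbeck semigroup is $(P_t f)(x) = \mathbb{E}\, f(e^{-t}x + \sqrt{1-e^{-2t}}\,Z)$, where $Z$ is a standard Gaussian random variable; write $f_t = P_t f$. For $\lambda\in\mathbb{R}$, a function $g:\mathbb{R}\to(0,\infty)$ is called $-\lambda$-log-concave if $x\mapsto \log g(x) - \lambda x^2/2$ is concave. *)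

theory Defs
  imports "HOL-Probability.Probability"
begin

definition gauss :: "real measure" where
  "gauss = density lborel std_normal_density"

definition OU :: "real \<Rightarrow> (real \<Rightarrow> real) \<Rightarrow> real \<Rightarrow> real" where
  "OU t f x = (\<integral>z. f (exp (- t) * x + sqrt (1 - exp (- 2 * t)) * z) \<partial>gauss)"

definition neg_log_concave :: "real \<Rightarrow> (real \<Rightarrow> real) \<Rightarrow> bool" where
  "neg_log_concave lam g \<longleftrightarrow> (\<forall>x. 0 < g x) \<and> concave_on UNIV (\<lambda>x. ln (g x) - lam * x\<^sup>2 / 2)"

definition C2 :: "(real \<Rightarrow> real) \<Rightarrow> bool" where
  "C2 g \<longleftrightarrow> (\<forall>x. g differentiable at x) \<and> (\<forall>x. deriv g differentiable at x)
     \<and> continuous_on UNIV (deriv (deriv g))"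

end

theory Submission
  imports Defs
begin

(* The example is f proportional to e^{lam y^2/2} (1_{[-R,R]} * e^{-lam y^2}).  Since log f - lam y^2/2
   is the logarithm of the convolution of the log-concave indicator of [-R,R] with a Gaussian, f is
   -lam-log-concave.  Because lam (1 - e^{-2t}) = 1, completing the square in Mehler's formula leaves
   P_t f(x) = C e^{q x^2} \<integral>_{-R}^{R} e^{k c x} dc with k = e^{-t}/(1 - e^{-2t}) and q = -k e^{-t}/4.
   The second derivative of log P_t f at 0 is 2q plus the variance k^2 R^2/3 of the uniform law on
   [-kR, kR], so it exceeds any given M once R is large. *)

lemma has_real_derivative_parametric_integral:
  fixes \<phi> \<phi>' :: "real \<Rightarrow> real \<Rightarrow> real"
  assumes "\<And>x c. ((\<lambda>x. \<phi> x c) has_real_derivative \<phi>' x c) (at x)"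
    and "\<And>x. continuous_on {a..b} (\<phi> x)"
    and "continuous_on UNIV (\<lambda>(x, c). \<phi>' x c)"
  shows "((\<lambda>x. integral {a..b} (\<phi> x)) has_real_derivative integral {a..b} (\<phi>' x)) (at x)"
proof -
  have "((\<lambda>x. integral (cbox a b) (\<phi> x)) has_field_derivative integral (cbox a b) (\<phi>' x))
          (at x within UNIV)"
    by (rule leibniz_rule_field_derivative)
       (use assms in \<open>auto intro: integrable_continuous_interval continuous_on_subset\<close>)
  then show ?thesis by simp
qed

lemma has_integral_real_derivative:
  fixes f f' :: "real \<Rightarrow> real"
  assumes "a \<le> b" and "\<And>x. (f has_real_derivative f' x) (at x)"
  shows "(f' has_integral (f b - f a)) {a..b}"
  by (rule fundamental_theorem_of_calculus[OF assms(1)])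
     (use assms(2) in \<open>auto simp: has_real_derivative_iff_has_vector_derivative
                              intro: has_vector_derivative_at_within\<close>)

lemma integral_pos_continuous:
  fixes g :: "real \<Rightarrow> real"
  assumes "a < b" and g: "continuous_on {a..b} g" and pos: "\<And>c. c \<in> {a..b} \<Longrightarrow> 0 < g c"
  shows "0 < integral {a..b} g"
proof -
  obtain m where m: "m \<in> {a..b}" and min: "\<And>c. c \<in> {a..b} \<Longrightarrow> g m \<le> g c"
    using continuous_attains_inf[OF compact_Icc _ g] \<open>a < b\<close> by fastforce
  have "0 < (b - a) * g m"
    using \<open>a < b\<close> pos[OF m] by simp
  also have "\<dots> = integral {a..b} (\<lambda>c. g m)"
    using \<open>a < b\<close> by simp
  also have "\<dots> \<le> integral {a..b} g"
    by (rule integral_le) (use g min in \<open>auto intro: integrable_continuous_interval\<close>)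
  finally show ?thesis .
qed

lemma concave_on_ln_if_deriv_ineq:
  fixes F F' F'' :: "real \<Rightarrow> real"
  assumes pos: "\<And>x. 0 < F x"
    and F': "\<And>x. (F has_real_derivative F' x) (at x)"
    and F'': "\<And>x. (F' has_real_derivative F'' x) (at x)"
    and ineq: "\<And>x. F'' x * F x \<le> (F' x)\<^sup>2"
  shows "concave_on UNIV (\<lambda>x. ln (F x))"
proof -
  have quotient': "((\<lambda>x. F' x / F x) has_real_derivative (F'' x * F x - F' x * F' x) / (F x)\<^sup>2) (at x)"
    for x
    using pos[of x] F'[of x] F''[of x] by (auto intro!: derivative_eq_intros simp: power2_eq_square)
  have antimono: "F' y / F y \<le> F' x / F x" if "x \<le> y" for x y
  proof (rule DERIV_nonpos_imp_decreasing_open[OF that])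
    show "\<exists>d. ((\<lambda>x. F' x / F x) has_real_derivative d) (at z) \<and> d \<le> 0" for z
      using quotient'[of z] ineq[of z] by (auto intro!: divide_nonpos_nonneg simp: power2_eq_square)
    show "continuous_on {x..y} (\<lambda>x. F' x / F x)"
      using quotient' by (meson DERIV_continuous continuous_at_imp_continuous_on)
  qed
  have "convex_on UNIV (\<lambda>x. - ln (F x))"
  proof (rule convex_on_realI[where f'="\<lambda>x. - (F' x / F x)"])
    show "((\<lambda>x. - ln (F x)) has_real_derivative - (F' x / F x)) (at x)" for x
      using pos[of x] F'[of x] by (auto intro!: derivative_eq_intros simp: field_simps)
  qed (use antimono in auto)
  then show ?thesis by (simp add: concave_on_def)
qed

lemma not_concave_on_if_second_deriv_pos:
  fixes \<psi> \<psi>' :: "real \<Rightarrow> real"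
  assumes \<psi>': "\<And>x. (\<psi> has_real_derivative \<psi>' x) (at x)"
    and \<psi>'': "(\<psi>' has_real_derivative l) (at x0)" and "0 < l"
  shows "\<not> concave_on UNIV \<psi>"
proof
  assume "concave_on UNIV \<psi>"
  then have "convex_on UNIV (\<lambda>x. - \<psi> x)" by (simp add: concave_on_def)
  obtain d where "0 < d" and incr: "\<And>h. 0 < h \<Longrightarrow> h < d \<Longrightarrow> \<psi>' x0 < \<psi>' (x0 + h)"
    using DERIV_pos_inc_right[OF \<psi>'' \<open>0 < l\<close>] by blast
  define h where "h = d / 2"
  have h: "0 < h" "h < d" using \<open>0 < d\<close> by (auto simp: h_def)
  obtain \<xi> where \<xi>: "x0 < \<xi>" "\<xi> < x0 + h" "\<psi> (x0 + h) - \<psi> x0 = h * \<psi>' \<xi>"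
    using MVT2[of x0 "x0 + h" \<psi> \<psi>'] h \<psi>' by auto
  have "h * \<psi>' x0 < h * \<psi>' \<xi>"
    using incr[of "\<xi> - x0"] \<xi> h by simp
  moreover have "- \<psi> (x0 + h) - - \<psi> x0 \<ge> - \<psi>' x0 * (x0 + h - x0)"
    by (rule convex_on_imp_above_tangent[OF \<open>convex_on UNIV (\<lambda>x. - \<psi> x)\<close>])
       (use \<psi>'[of x0] in \<open>auto intro!: derivative_eq_intros\<close>)
  ultimately show False using \<xi> by (simp add: algebra_simps)
qed

lemma integral_Icc_eq_lborel:
  fixes f :: "real \<Rightarrow> real"
  assumes "continuous_on {a..b} f"
  shows "integral {a..b} f = (\<integral>c. indicator {a..b} c * f c \<partial>lborel)"
  using set_borel_integral_eq_integral(2)[OF borel_integrable_atLeastAtMost'[OF assms]]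
  by (simp add: set_lebesgue_integral_def)

lemma lborel_integral_integral_Icc_swap:
  fixes g :: "real \<Rightarrow> real \<Rightarrow> real" and K :: "real \<Rightarrow> real"
  assumes meas: "(\<lambda>(c, z). g z c) \<in> borel_measurable (lborel \<Otimes>\<^sub>M lborel)"
    and nonneg: "\<And>z c. 0 \<le> g z c"
    and inner: "\<And>c. has_bochner_integral lborel (\<lambda>z. g z c) (K c)"
    and K: "continuous_on {a..b} K"
    and slices: "\<And>z. continuous_on {a..b} (g z)"
  shows "(\<integral>z. integral {a..b} (g z) \<partial>lborel) = integral {a..b} K"
proof -
  define f where "f = (\<lambda>c z. indicator {a..b} c * g z c)"
  have int: "integrable (lborel \<Otimes>\<^sub>M lborel) (case_prod f)"
  proof (rule lborel_pair.Fubini_integrable)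
    show "case_prod f \<in> borel_measurable (lborel \<Otimes>\<^sub>M lborel)"
      using meas unfolding f_def by measurable
    have "(\<integral>z. norm (f c z) \<partial>lborel) = indicator {a..b} c * K c" for c
      using inner[of c] nonneg by (simp add: f_def has_bochner_integral_iff abs_mult)
    then show "integrable lborel (\<lambda>c. \<integral>z. norm (case_prod f (c, z)) \<partial>lborel)"
      using borel_integrable_atLeastAtMost'[OF K] by (simp add: set_integrable_def)
    show "AE c in lborel. integrable lborel (\<lambda>z. case_prod f (c, z))"
      using inner by (simp add: f_def has_bochner_integral_iff)
  qed
  have "(\<integral>z. integral {a..b} (g z) \<partial>lborel) = (\<integral>z. (\<integral>c. f c z \<partial>lborel) \<partial>lborel)"
    using slices by (simp add: f_def integral_Icc_eq_lborel)
  also have "\<dots> = (\<integral>c. (\<integral>z. f c z \<partial>lborel) \<partial>lborel)"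
    by (rule lborel_pair.Fubini_integral[OF int])
  also have "\<dots> = integral {a..b} K"
    using inner K by (simp add: f_def integral_Icc_eq_lborel has_bochner_integral_iff)
  finally show ?thesis .
qed

lemma C2I:
  fixes g g' g'' :: "real \<Rightarrow> real"
  assumes "\<And>x. (g has_real_derivative g' x) (at x)" "\<And>x. (g' has_real_derivative g'' x) (at x)"
    and "continuous_on UNIV g''"
  shows "C2 g"
proof -
  have "deriv g = g'" "deriv g' = g''"
    using assms(1,2) by (auto intro!: ext DERIV_imp_deriv)
  then show ?thesis
    using assms unfolding C2_def by (auto simp: real_differentiable_def)
qed

lemma deriv_deriv_eqI:
  fixes h h' :: "real \<Rightarrow> real"
  assumes "\<And>x. (h has_real_derivative h' x) (at x)" "(h' has_real_derivative l) (at x0)"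
  shows "deriv (deriv h) x0 = l"
proof -
  have "deriv h = h'" using assms(1) by (auto intro!: ext DERIV_imp_deriv)
  then show ?thesis using assms(2) by (simp add: DERIV_imp_deriv)
qed

lemma not_neg_log_concave_if_log_second_deriv:
  fixes g L' :: "real \<Rightarrow> real"
  assumes "\<And>x. ((\<lambda>x. ln (g x)) has_real_derivative L' x) (at x)"
    and "(L' has_real_derivative l) (at x0)" and "M < l"
  shows "\<not> neg_log_concave M g"
proof -
  have "\<not> concave_on UNIV (\<lambda>x. ln (g x) - M * x\<^sup>2 / 2)"
  proof (rule not_concave_on_if_second_deriv_pos)
    show "((\<lambda>x. ln (g x) - M * x\<^sup>2 / 2) has_real_derivative L' x - M * x) (at x)" for x
      by (intro DERIV_diff assms(1)) (auto intro!: derivative_eq_intros)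
    show "((\<lambda>x. L' x - M * x) has_real_derivative l - M) (at x0)"
      using assms(2) by (auto intro!: derivative_eq_intros)
  qed (use \<open>M < l\<close> in simp)
  then show ?thesis by (simp add: neg_log_concave_def)
qed

definition gauss_box :: "real \<Rightarrow> real \<Rightarrow> real \<Rightarrow> real" where
  "gauss_box lam R y = integral {-R..R} (\<lambda>c. exp (- lam * (y - c)\<^sup>2))"

lemma gauss_box_pos: "0 < R \<Longrightarrow> 0 < gauss_box lam R y"
  unfolding gauss_box_def by (intro integral_pos_continuous continuous_intros) auto

lemma has_real_derivative_gauss_box:
  assumes "0 \<le> R"
  shows "(gauss_box lam R has_real_derivative exp (- lam * (y + R)\<^sup>2) - exp (- lam * (y - R)\<^sup>2)) (at y)"
proof -
  have D: "(gauss_box lam R has_real_derivative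
          integral {-R..R} (\<lambda>c. exp (- lam * (y - c)\<^sup>2) * (- lam * (2 * (y - c))))) (at y)"
    unfolding gauss_box_def
    by (rule has_real_derivative_parametric_integral)
       (auto intro!: derivative_eq_intros continuous_intros simp: split_beta)
  have I: "((\<lambda>c. exp (- lam * (y - c)\<^sup>2) * (- lam * (2 * (y - c))))
             has_integral - exp (- lam * (y - R)\<^sup>2) - - exp (- lam * (y - - R)\<^sup>2)) {-R..R}"
    by (rule has_integral_real_derivative[where f="\<lambda>c. - exp (- lam * (y - c)\<^sup>2)"])
       (use assms in \<open>auto intro!: derivative_eq_intros simp: algebra_simps\<close>)
  have "integral {-R..R} (\<lambda>c. exp (- lam * (y - c)\<^sup>2) * (- lam * (2 * (y - c))))
          = exp (- lam * (y + R)\<^sup>2) - exp (- lam * (y - R)\<^sup>2)"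
    using integral_unique[OF I] by simp
  with D show ?thesis by simp
qed

lemma gauss_box_deriv_ineq:
  assumes "0 < R" "0 < lam"
  shows "(2 * lam * (y - R) * exp (- lam * (y - R)\<^sup>2) - 2 * lam * (y + R) * exp (- lam * (y + R)\<^sup>2))
           * gauss_box lam R y
         \<le> (exp (- lam * (y + R)\<^sup>2) - exp (- lam * (y - R)\<^sup>2))\<^sup>2"
proof -
  define g where "g = (\<lambda>c. exp (- lam * (y - c)\<^sup>2))"
  define A where "A = exp (- lam * (y - R)\<^sup>2)"
  define B where "B = exp (- lam * (y + R)\<^sup>2)"
  define m where "m = integral {-R..R} (\<lambda>c. (y - c) * g c)"
  have "((\<lambda>c. (y - c) * g c) has_integral g R / (2 * lam) - g (- R) / (2 * lam)) {-R..R}"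
    by (rule has_integral_real_derivative[where f="\<lambda>c. g c / (2 * lam)"])
       (use assms in \<open>auto simp: g_def field_simps intro!: derivative_eq_intros\<close>)
  \<comment> \<open>i.e. the derivative \<open>B - A\<close> of \<open>gauss_box lam R\<close> at \<open>y\<close> is \<open>-2 lam m\<close>\<close>
  then have m: "2 * lam * m = A - B"
    using assms by (simp add: m_def g_def A_def B_def integral_unique field_simps)
  have "integral {-R..R} (\<lambda>c. (y - R) * g c) \<le> m" "m \<le> integral {-R..R} (\<lambda>c. (y + R) * g c)"
    unfolding m_def g_def
    by (rule integral_le; auto intro!: mult_right_mono integrable_continuous_interval continuous_intros)+
  then have "(y - R) * gauss_box lam R y \<le> m" "m \<le> (y + R) * gauss_box lam R y"
    by (simp_all add: gauss_box_def g_def)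
  then have "((y - R) * gauss_box lam R y - m) * A \<le> 0" "0 \<le> ((y + R) * gauss_box lam R y - m) * B"
    by (auto intro!: mult_nonpos_nonneg mult_nonneg_nonneg simp: A_def B_def)
  then have "2 * lam * (((y - R) * A - (y + R) * B) * gauss_box lam R y) \<le> 2 * lam * (m * (A - B))"
    using assms by (intro mult_left_mono) (auto simp: algebra_simps)
  also have "\<dots> = (A - B)\<^sup>2"
    by (simp add: m mult.assoc[symmetric] power2_eq_square)
  finally show ?thesis
    by (simp add: A_def B_def algebra_simps power2_commute)
qed

lemma concave_on_ln_gauss_box:
  assumes "0 < R" "0 < lam"
  shows "concave_on UNIV (\<lambda>y. ln (gauss_box lam R y))"
proof (rule concave_on_ln_if_deriv_ineq)
  show "(gauss_box lam R has_real_derivative exp (- lam * (y + R)\<^sup>2) - exp (- lam * (y - R)\<^sup>2)) (at y)"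
    for y using assms by (intro has_real_derivative_gauss_box) simp
  show "((\<lambda>y. exp (- lam * (y + R)\<^sup>2) - exp (- lam * (y - R)\<^sup>2)) has_real_derivative
          2 * lam * (y - R) * exp (- lam * (y - R)\<^sup>2) - 2 * lam * (y + R) * exp (- lam * (y + R)\<^sup>2))
        (at y)" for y
    by (auto intro!: derivative_eq_intros simp: algebra_simps)
qed (use assms gauss_box_pos gauss_box_deriv_ineq in auto)

definition box_moment :: "real \<Rightarrow> real \<Rightarrow> nat \<Rightarrow> real \<Rightarrow> real" where
  "box_moment k R j x = integral {-R..R} (\<lambda>c. (k * c) ^ j * exp (k * c * x))"

lemma has_real_derivative_box_moment:
  "(box_moment k R j has_real_derivative box_moment k R (Suc j) x) (at x)"
proof -
  have "(box_moment k R j has_real_derivative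
          integral {-R..R} (\<lambda>c. (k * c) ^ j * (exp (k * c * x) * (k * c)))) (at x)"
    unfolding box_moment_def
    by (rule has_real_derivative_parametric_integral)
       (auto intro!: derivative_eq_intros continuous_intros simp: split_beta)
  then show ?thesis
    by (simp add: box_moment_def algebra_simps)
qed

lemma continuous_on_box_moment: "continuous_on S (box_moment k R j)"
  using has_real_derivative_box_moment
  by (meson DERIV_continuous continuous_at_imp_continuous_on)

lemma box_moment_pos: "0 < R \<Longrightarrow> 0 < box_moment k R 0 x"
  unfolding box_moment_def by (intro integral_pos_continuous continuous_intros) auto

lemma box_moment_at_0:
  assumes "0 < R"
  shows "box_moment k R 0 0 = 2 * R" "box_moment k R 1 0 = 0" "box_moment k R 2 0 = 2 * k\<^sup>2 * R ^ 3 / 3"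
proof -
  show "box_moment k R 0 0 = 2 * R"
    using assms by (simp add: box_moment_def)
  have "((\<lambda>c. k * c) has_integral k * R\<^sup>2 / 2 - k * (- R)\<^sup>2 / 2) {-R..R}"
    by (rule has_integral_real_derivative) (use assms in \<open>auto intro!: derivative_eq_intros\<close>)
  from integral_unique[OF this] show "box_moment k R 1 0 = 0"
    by (simp add: box_moment_def)
  have "((\<lambda>c. (k * c)\<^sup>2) has_integral k\<^sup>2 * R ^ 3 / 3 - k\<^sup>2 * (- R) ^ 3 / 3) {-R..R}"
    by (rule has_integral_real_derivative)
       (use assms in \<open>auto intro!: derivative_eq_intros simp: power2_eq_square power3_eq_cube\<close>)
  then show "box_moment k R 2 0 = 2 * k\<^sup>2 * R ^ 3 / 3"
    by (simp add: box_moment_def integral_unique)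
qed

lemma gauss_mult_box_moment_log_curvature:
  fixes C q k R M :: real
  assumes "0 < C" "0 < R"
  defines "U \<equiv> \<lambda>x. C * exp (q * x\<^sup>2) * box_moment k R 0 x"
  shows "C2 U"
    and "deriv (deriv (\<lambda>x. ln (U x))) 0 = 2 * q + k\<^sup>2 * R\<^sup>2 / 3"
    and "M < 2 * q + k\<^sup>2 * R\<^sup>2 / 3 \<Longrightarrow> \<not> neg_log_concave M U"
proof -
  let ?S = "box_moment k R"
  have S0': "(?S 0 has_real_derivative ?S 1 x) (at x)"
    and S1': "(?S 1 has_real_derivative ?S 2 x) (at x)" for x
    using has_real_derivative_box_moment[of k R 0 x] has_real_derivative_box_moment[of k R 1 x]
    by (simp_all add: numeral_2_eq_2)
  show "C2 U"
  proof (rule C2I)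
    show "(U has_real_derivative C * exp (q * x\<^sup>2) * (2 * q * x * ?S 0 x + ?S 1 x)) (at x)" for x
      unfolding U_def by (rule derivative_eq_intros S0' S1' refl | simp)+ (simp add: algebra_simps)
    show "((\<lambda>x. C * exp (q * x\<^sup>2) * (2 * q * x * ?S 0 x + ?S 1 x)) has_real_derivative
            C * exp (q * x\<^sup>2) * ((2 * q + 4 * q\<^sup>2 * x\<^sup>2) * ?S 0 x + 4 * q * x * ?S 1 x + ?S 2 x)) (at x)" for x
      by (rule derivative_eq_intros S0' S1' refl | simp)+ (simp add: algebra_simps power2_eq_square)
  qed (intro continuous_intros continuous_on_box_moment)
  have lnU': "((\<lambda>x. ln (U x)) has_real_derivative 2 * q * x + ?S 1 x / ?S 0 x) (at x)" for x
    unfolding U_def using S0' S1' box_moment_pos[OF \<open>0 < R\<close>, of k x] \<open>0 < C\<close>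
    by (auto intro!: derivative_eq_intros simp: field_simps)
  have D: "((\<lambda>x. 2 * q * x + ?S 1 x / ?S 0 x) has_real_derivative
          2 * q + (?S 2 0 * ?S 0 0 - ?S 1 0 * ?S 1 0) / (?S 0 0 * ?S 0 0)) (at 0)"
    using S0' S1' box_moment_pos[OF \<open>0 < R\<close>, of k 0] by (auto intro!: derivative_eq_intros)
  have V: "(?S 2 0 * ?S 0 0 - ?S 1 0 * ?S 1 0) / (?S 0 0 * ?S 0 0) = k\<^sup>2 * R\<^sup>2 / 3"
    using \<open>0 < R\<close> unfolding box_moment_at_0[OF \<open>0 < R\<close>]
    by (simp add: power2_eq_square power3_eq_cube)
  from D have lnU'': "((\<lambda>x. 2 * q * x + ?S 1 x / ?S 0 x) has_real_derivative 2 * q + k\<^sup>2 * R\<^sup>2 / 3) (at 0)"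
    unfolding V .
  show "deriv (deriv (\<lambda>x. ln (U x))) 0 = 2 * q + k\<^sup>2 * R\<^sup>2 / 3"
    by (rule deriv_deriv_eqI[OF lnU' lnU''])
  show "M < 2 * q + k\<^sup>2 * R\<^sup>2 / 3 \<Longrightarrow> \<not> neg_log_concave M U"
    by (rule not_neg_log_concave_if_log_second_deriv[OF lnU' lnU''])
qed

lemma std_normal_density_mult_gauss_complete_square:
  fixes a s x z c lam :: real
  assumes "0 < s" "lam = 1 / s\<^sup>2"
  shows "std_normal_density z * (exp (lam * (a * x + s * z)\<^sup>2 / 2) * exp (- lam * (a * x + s * z - c)\<^sup>2))
       = 1 / sqrt 2 * exp (- (a\<^sup>2 / (4 * s\<^sup>2)) * x\<^sup>2 + a / s\<^sup>2 * c * x)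
           * normal_density ((2 * c - a * x) / (2 * s)) (1 / sqrt 2) z"
proof -
  let ?m = "(2 * c - a * x) / (2 * s)"
  have square: "- z\<^sup>2 / 2 + lam * (a * x + s * z)\<^sup>2 / 2 + - lam * (a * x + s * z - c)\<^sup>2
                = - (a\<^sup>2 / (4 * s\<^sup>2)) * x\<^sup>2 + a / s\<^sup>2 * c * x + - (z - ?m)\<^sup>2"
    using assms(1) unfolding assms(2) by (simp add: field_simps power2_eq_square)
  have "std_normal_density z * (exp (lam * (a * x + s * z)\<^sup>2 / 2) * exp (- lam * (a * x + s * z - c)\<^sup>2))
        = 1 / sqrt (2 * pi) * exp (- z\<^sup>2 / 2 + lam * (a * x + s * z)\<^sup>2 / 2 + - lam * (a * x + s * z - c)\<^sup>2)"
    unfolding std_normal_density_def exp_add by (simp add: mult_ac)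
  also have "\<dots> = 1 / sqrt 2 * exp (- (a\<^sup>2 / (4 * s\<^sup>2)) * x\<^sup>2 + a / s\<^sup>2 * c * x)
                    * (1 / sqrt pi * exp (- (z - ?m)\<^sup>2))"
    unfolding square exp_add by (simp add: real_sqrt_mult)
  also have "1 / sqrt pi * exp (- (z - ?m)\<^sup>2) = normal_density ?m (1 / sqrt 2) z"
    unfolding normal_density_def by (simp add: power_divide)
  finally show ?thesis .
qed

lemma has_bochner_integral_std_normal_density_mult_gauss:
  fixes a s x c lam :: real
  assumes "0 < s" "lam = 1 / s\<^sup>2"
  shows "has_bochner_integral lborel
           (\<lambda>z. std_normal_density z * (exp (lam * (a * x + s * z)\<^sup>2 / 2) * exp (- lam * (a * x + s * z - c)\<^sup>2)))
           (1 / sqrt 2 * exp (- (a\<^sup>2 / (4 * s\<^sup>2)) * x\<^sup>2 + a / s\<^sup>2 * c * x))"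
  unfolding std_normal_density_mult_gauss_complete_square[OF assms]
  by (simp add: has_bochner_integral_iff)

definition tilted_gauss_box :: "real \<Rightarrow> real \<Rightarrow> real \<Rightarrow> real" where
  "tilted_gauss_box lam R y = exp (lam * y\<^sup>2 / 2) * gauss_box lam R y"

lemma tilted_gauss_box_eq_integral:
  "tilted_gauss_box lam R y = integral {-R..R} (\<lambda>c. exp (lam * y\<^sup>2 / 2) * exp (- lam * (y - c)\<^sup>2))"
  by (simp add: tilted_gauss_box_def gauss_box_def)

lemma tilted_gauss_box_pos: "0 < R \<Longrightarrow> 0 < tilted_gauss_box lam R y"
  by (simp add: tilted_gauss_box_def gauss_box_pos)

lemma borel_measurable_tilted_gauss_box:
  assumes "0 \<le> R"
  shows "tilted_gauss_box lam R \<in> borel_measurable borel"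
proof (rule borel_measurable_continuous_onI)
  show "continuous_on UNIV (tilted_gauss_box lam R)"
    unfolding tilted_gauss_box_def using has_real_derivative_gauss_box[OF assms]
    by (intro continuous_intros continuous_at_imp_continuous_on ballI DERIV_continuous) auto
qed

lemma tilted_gauss_box_le:
  assumes "0 \<le> lam" "0 \<le> R"
  shows "tilted_gauss_box lam R y \<le> 2 * R * exp (lam * R\<^sup>2)"
proof -
  have "tilted_gauss_box lam R y \<le> integral {-R..R} (\<lambda>c. exp (lam * R\<^sup>2))"
    unfolding tilted_gauss_box_eq_integral
  proof (intro integral_le integrable_continuous_interval continuous_intros)
    fix c :: real
    assume "c \<in> {-R..R}"
    then have "c\<^sup>2 \<le> R\<^sup>2" by (intro power2_le_iff_abs_le[THEN iffD2]) auto
    moreover have "y\<^sup>2 / 2 - (y - c)\<^sup>2 = c\<^sup>2 - (y - 2 * c)\<^sup>2 / 2"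
      by (simp add: field_simps power2_eq_square)
    moreover have "0 \<le> (y - 2 * c)\<^sup>2" by simp
    ultimately have "y\<^sup>2 / 2 - (y - c)\<^sup>2 \<le> R\<^sup>2" by linarith
    then have "lam * (y\<^sup>2 / 2 - (y - c)\<^sup>2) \<le> lam * R\<^sup>2"
      using assms(1) by (rule mult_left_mono)
    then show "exp (lam * y\<^sup>2 / 2) * exp (- lam * (y - c)\<^sup>2) \<le> exp (lam * R\<^sup>2)"
      by (simp add: exp_add[symmetric] algebra_simps)
  qed
  also have "\<dots> = 2 * R * exp (lam * R\<^sup>2)"
    using assms by simp
  finally show ?thesis .
qed

lemma neg_log_concave_tilted_gauss_box:
  assumes "0 < lam" "0 < R"
  shows "neg_log_concave lam (tilted_gauss_box lam R)"
proof -
  have "(\<lambda>y. ln (tilted_gauss_box lam R y) - lam * y\<^sup>2 / 2) = (\<lambda>y. ln (gauss_box lam R y))"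
    using gauss_box_pos[OF assms(2)] by (simp add: tilted_gauss_box_def ln_mult_pos)
  then show ?thesis
    using concave_on_ln_gauss_box[OF assms(2,1)] tilted_gauss_box_pos[OF assms(2)]
    by (simp add: neg_log_concave_def)
qed

lemma neg_log_concave_divide:
  assumes "neg_log_concave lam g" "0 < Z"
  shows "neg_log_concave lam (\<lambda>x. g x / Z)"
proof -
  have pos: "0 < g x" for x
    using assms(1) by (simp add: neg_log_concave_def)
  have "concave_on UNIV (\<lambda>x. (ln (g x) - lam * x\<^sup>2 / 2) - ln Z)"
    using assms(1) convex_on_const[of UNIV "ln Z"] by (auto simp: neg_log_concave_def intro: concave_on_diff)
  moreover have "(\<lambda>x. ln (g x / Z) - lam * x\<^sup>2 / 2) = (\<lambda>x. (ln (g x) - lam * x\<^sup>2 / 2) - ln Z)"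
    using pos assms(2) by (simp add: ln_divide_pos algebra_simps)
  ultimately show ?thesis
    using pos assms(2) unfolding neg_log_concave_def by simp
qed

lemma gauss_integral_tilted_gauss_box:
  assumes "0 < s" "lam = 1 / s\<^sup>2" "0 \<le> R"
  shows "(\<integral>z. tilted_gauss_box lam R (a * x + s * z) \<partial>gauss)
           = 1 / sqrt 2 * exp (- (a\<^sup>2 / (4 * s\<^sup>2)) * x\<^sup>2) * box_moment (a / s\<^sup>2) R 0 x"
proof -
  have [measurable]: "tilted_gauss_box lam R \<in> borel_measurable borel"
    using borel_measurable_tilted_gauss_box[OF assms(3)] .
  have "(\<integral>z. tilted_gauss_box lam R (a * x + s * z) \<partial>gauss)
        = (\<integral>z. std_normal_density z * tilted_gauss_box lam R (a * x + s * z) \<partial>lborel)"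
    unfolding gauss_def by (subst integral_density) (auto simp: normal_density_nonneg)
  also have "\<dots> = (\<integral>z. integral {-R..R} (\<lambda>c. std_normal_density z *
             (exp (lam * (a * x + s * z)\<^sup>2 / 2) * exp (- lam * (a * x + s * z - c)\<^sup>2))) \<partial>lborel)"
    by (auto simp: tilted_gauss_box_eq_integral intro!: Bochner_Integration.integral_cong)
  also have "\<dots> = integral {-R..R} (\<lambda>c. 1 / sqrt 2 * exp (- (a\<^sup>2 / (4 * s\<^sup>2)) * x\<^sup>2 + a / s\<^sup>2 * c * x))"
    by (rule lborel_integral_integral_Icc_swap)
       (use assms(1) has_bochner_integral_std_normal_density_mult_gauss[OF assms(1,2)]
         in \<open>auto intro!: continuous_intros simp: normal_density_nonneg\<close>)
  also have "\<dots> = 1 / sqrt 2 * exp (- (a\<^sup>2 / (4 * s\<^sup>2)) * x\<^sup>2) * box_moment (a / s\<^sup>2) R 0 x"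
    unfolding box_moment_def exp_add by simp
  finally show ?thesis .
qed

lemma gauss_integral_pos:
  fixes g :: "real \<Rightarrow> real"
  assumes "g \<in> borel_measurable borel" "\<And>x. 0 < g x" "\<And>x. g x \<le> B"
  shows "integrable gauss g" "0 < (\<integral>x. g x \<partial>gauss)"
proof -
  interpret prob_space gauss
    unfolding gauss_def by (rule prob_space_normal_density) simp
  show int: "integrable gauss g"
    by (rule integrable_const_bound[where B = B])
       (use assms in \<open>auto simp: gauss_def less_imp_le\<close>)
  show "0 < (\<integral>x. g x \<partial>gauss)"
    using integral_less_AE_space[OF integrable_zero int] assms(2) by (simp add: emeasure_space_1)
qed

lemma normalized_tilted_gauss_box:
  assumes "0 < lam" "0 < R"
  defines "Z \<equiv> \<integral>y. tilted_gauss_box lam R y \<partial>gauss"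
  shows "0 < Z"
    and "bounded (range (\<lambda>y. tilted_gauss_box lam R y / Z))"
    and "(\<lambda>y. tilted_gauss_box lam R y / Z) \<in> borel_measurable borel"
    and "neg_log_concave lam (\<lambda>y. tilted_gauss_box lam R y / Z)"
    and "integrable gauss (\<lambda>y. tilted_gauss_box lam R y / Z)"
    and "(\<integral>y. tilted_gauss_box lam R y / Z \<partial>gauss) = 1"
proof -
  note meas = borel_measurable_tilted_gauss_box[OF less_imp_le[OF \<open>0 < R\<close>]]
  note pos = tilted_gauss_box_pos[OF \<open>0 < R\<close>]
  note le = tilted_gauss_box_le[OF less_imp_le[OF \<open>0 < lam\<close>] less_imp_le[OF \<open>0 < R\<close>]]
  show "0 < Z" "integrable gauss (\<lambda>y. tilted_gauss_box lam R y / Z)"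
    using gauss_integral_pos[OF meas pos le] by (simp_all add: Z_def)
  then show "(\<integral>y. tilted_gauss_box lam R y / Z \<partial>gauss) = 1"
    by (simp add: Z_def)
  show "bounded (range (\<lambda>y. tilted_gauss_box lam R y / Z))"
    using pos le \<open>0 < Z\<close> unfolding bounded_iff
    by (intro exI[of _ "2 * R * exp (lam * R\<^sup>2) / Z"]) (auto simp: abs_of_pos intro!: divide_right_mono)
  show "(\<lambda>y. tilted_gauss_box lam R y / Z) \<in> borel_measurable borel"
    using meas by measurable
  show "neg_log_concave lam (\<lambda>y. tilted_gauss_box lam R y / Z)"
    using neg_log_concave_tilted_gauss_box[OF assms(1,2)] \<open>0 < Z\<close> by (rule neg_log_concave_divide)
qed

lemma OU_tilted_gauss_box:
  assumes "0 < t" "lam = 1 / (1 - exp (- 2 * t))" "0 \<le> R"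
  shows "OU t (\<lambda>y. tilted_gauss_box lam R y / Z) x
           = 1 / sqrt 2 / Z * exp (- ((exp (- t))\<^sup>2 / (4 * (1 - exp (- 2 * t)))) * x\<^sup>2)
               * box_moment (exp (- t) / (1 - exp (- 2 * t))) R 0 x"
proof -
  define s where "s = sqrt (1 - exp (- 2 * t))"
  have "0 < s" and s2: "s\<^sup>2 = 1 - exp (- 2 * t)"
    using assms(1) by (simp_all add: s_def)
  then have lam: "lam = 1 / s\<^sup>2"
    using assms(2) by simp
  have "OU t (\<lambda>y. tilted_gauss_box lam R y / Z) x
          = (\<integral>z. tilted_gauss_box lam R (exp (- t) * x + s * z) \<partial>gauss) / Z"
    by (simp add: OU_def s_def)
  then show ?thesis
    unfolding gauss_integral_tilted_gauss_box[OF \<open>0 < s\<close> lam assms(3)] s2 by simp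
qed

theorem mainTheorem6:
  fixes t lam M :: real
  assumes "t > 0" and "lam = 1 / (1 - exp (- 2 * t))" and "M > 0"
  shows "\<exists>f :: real \<Rightarrow> real.
           bounded (range f) \<and> f \<in> borel_measurable borel \<and>
           neg_log_concave lam f \<and> integrable gauss f \<and> (\<integral>x. f x \<partial>gauss) = 1 \<and>
           \<not> neg_log_concave M (OU t f) \<and>
           C2 (OU t f) \<and> deriv (deriv (\<lambda>x. ln (OU t f x))) 0 \<ge> M"
proof -
  define k where "k = exp (- t) / (1 - exp (- 2 * t))"
  define q where "q = - ((exp (- t))\<^sup>2 / (4 * (1 - exp (- 2 * t))))"
  have "0 < lam" "0 < k" "q \<le> 0"
    using assms(1,2) by (simp_all add: k_def q_def)
  define R where "R = sqrt (3 * (M + 1 - 2 * q) / k\<^sup>2)"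
  have "0 < R" and curvature: "2 * q + k\<^sup>2 * R\<^sup>2 / 3 = M + 1"
    using \<open>0 < k\<close> \<open>q \<le> 0\<close> \<open>M > 0\<close> by (simp_all add: R_def field_simps)
  define Z where "Z = (\<integral>y. tilted_gauss_box lam R y \<partial>gauss)"
  let ?f = "\<lambda>y. tilted_gauss_box lam R y / Z"
  have "OU t ?f = (\<lambda>x. 1 / sqrt 2 / Z * exp (q * x\<^sup>2) * box_moment k R 0 x)"
    using OU_tilted_gauss_box[OF assms(1,2) less_imp_le[OF \<open>0 < R\<close>]] by (auto simp: k_def q_def)
  then show ?thesis
    using normalized_tilted_gauss_box[OF \<open>0 < lam\<close> \<open>0 < R\<close>, folded Z_def] curvature \<open>0 < R\<close>
      gauss_mult_box_moment_log_curvature[where C = "1 / sqrt 2 / Z" and R = R and q = q and k = k]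
    by (intro exI[of _ ?f]) auto
qed

end
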